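(* Consider the semi-discretization of the 3-D compressible Euler equations on a conforming hexahedral mesh described in the context. Assume the diagonal metric matrices satisfy, for every element $\kappa$ and every time $\tau$, $$\frac{\mathrm{d}}{\mathrm{d}\tau}\bigl(\mathsf{J}_\kappa\mathbf{1}\bigr)+\sum_{l=1}^{3}\mathsf{D}_{\xi_l}\mathsf{B}_{l,\kappa}\mathbf{1}=\mathbf{0},\qquad \sum_{l=1}^{3}\mathsf{D}_{\xi_l}\mathsf{A}_{lm,\kappa}\mathbf{1}=\mathbf{0},\quad m=1,2,3 .$$ Then the scheme is freestream preserving. That is, let $u_c\in\mathbb{R}^5$ be an admissible constant state ($\rho>0$, $T>0$). If at some time every row of $q_\kappa$ and every row of the neighbouring states $q_{\kappa_{2l-1}},q_{\kappa_{2l}}$ ($l=1,2,3$) entering the interface terms equals $u_c^T$, then $\frac{\mathrm d q_\kappa}{\mathrm d\tau}=0$ at that time.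
   Context: **Gas model.** Ideal gas with gas constant $R>0$ and $\gamma>1$. Set $c_p=\gamma R/(\gamma-1)$ and $c_v=R/(\gamma-1)$. Conservative variables are $u=(\rho,\rho V_1,\rho V_2,\rho V_3,\rho E)^T$, where $E=c_vT+\tfrac12|V|^2$. Pressure is $p=\rho RT$ and specific enthalpy is $h=c_pT$. Inviscid fluxes are $F_m(u)=(\rho V_m,\rho V_mV_1+\delta_{m1}p,\rho V_mV_2+\delta_{m2}p,\rho V_mV_3+\delta_{m3}p,\rho V_m(E+p/\rho))^T$. Thermodynamic entropy is $s=\frac{R}{\gamma-1}\log(T/T_\infty)-R\log(\rho/\rho_\infty)$. Mathematical entropy is $\mathcal S=-\rho s$, with entropy flux $\mathcal F_{x_m}=-\rho sV_m$. Entropy variables are $w(u)=(\partial\mathcal S/\partial u)^T$. Potentials are $\varphi=w^Tu-\mathcal S$ and $\psi_m=w^TF_m-\mathcal F_{x_m}$. **Two-point fluxes.** $U^{sc}(u,v),F^{sc}_m(u,v)\in\mathbb{R}^5$ satisfy: - symmetry in $(u,v)$; - consistency: $U^{sc}(u,u)=u$, $F^{sc}_m(u,u)=F_m(u)$; - shuffle conditions: $(w(u)-w(v))^TU^{sc}(u,v)=\varphi(u)-\varphi(v)$ and $(w(u)-w(v))^TF^{sc}_m(u,v)=\psi_m(u)-\psi_m(v)$. **1-D SBP operators (spectral collocation).** For $l=1,2,3$, take $N_l$ nodes $\alpha_l=\xi_{l,1}<\dots<\xi_{l,N_l}=\beta_l$. Let $H_l$ be diagonal positive definite and $Q_l+Q_l^T=E_l:=e_{N_l}e_{N_l}^T-e_1e_1^T$.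 Set $D_l=H_l^{-1}Q_l$, with $D_l\mathbf 1=\mathbf 0$. **Tensor-product operators.** Each element has $N=N_1N_2N_3$ nodes. Define $\mathsf M=H_1\otimes H_2\otimes H_3$. For $l=1$: - $\mathsf D_{\xi_1}=D_1\otimes I\otimes I$ and $\mathsf E_{\xi_1}=E_1\otimes H_2\otimes H_3$; - $\mathsf R_{\xi_1,\alpha}=e_1^T\otimes I\otimes I$ and $\mathsf R_{\xi_1,\beta}=e_{N_1}^T\otimes I\otimes I$; - $\mathsf P_{\xi_1}=H_2\otimes H_3$. The operators for $l=2,3$ are analogous, with the 1-D factor in position $l$. $\circ$ is the Hadamard product, and $(\mathsf X\circ \mathsf Y)\mathbf 1$ means the Hadamard product is formed first. **Mesh and metrics.** Elements are conforming hexahedra, each the image of a reference cube under a smooth, invertible, time-dependent map. Element $\kappa$ carries: - nodal states $q_\kappa(\tau)\in\mathbb{R}^{N\times 5}$, where row $a$ is the state at node $a$; - diagonal matrices $\mathsf J_\kappa$ (positive entries, approximating $J$), $\mathsf B_{l,\kappa}$ (approximating $J\partial\xi_l/\partial t$) and $\mathsf A_{lm,\kappa}$ (approximating $J\partial\xi_l/\partial x_m$) at the nodes. $\kappa_{2l-1}$ and $\kappa_{2l}$ denote the neighbours (or boundary data states) across the faces $\xi_l=\alpha_l$ and $\xi_l=\beta_l$, respectively. **Flux matrices.** For $i=1,\dots,5$, let $\mathsf U^{sc,i}(q_\kappa,q_r)\in\mathbb{R}^{N\times N}$ have $(a,b)$ entry equal to the $i$-th component of $U^{sc}(q_\kappa(a,:),q_r(b,:))$.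 Define $\mathsf F^{sc,i}_m$ analogously. **Scheme.** For every element $\kappa$ and $i=1,\dots,5$: $$\tfrac{\mathrm d}{\mathrm d\tau}(\mathsf J_\kappa q_\kappa(:,i))+\sum_{l}\bigl[(\mathsf D_{\xi_l}\mathsf B_{l,\kappa}+\mathsf B_{l,\kappa}\mathsf D_{\xi_l})\circ\mathsf U^{sc,i}(q_\kappa,q_\kappa)\bigr]\mathbf 1+\sum_{l,m}\bigl[(\mathsf D_{\xi_l}\mathsf A_{lm,\kappa}+\mathsf A_{lm,\kappa}\mathsf D_{\xi_l})\circ\mathsf F^{sc,i}_m(q_\kappa,q_\kappa)\bigr]\mathbf 1 = \mathsf M^{-1}\sum_l\Bigl[(\mathsf E_{\xi_l}\mathsf B_{l,\kappa})\circ\mathsf U^{sc,i}(q_\kappa,q_\kappa)\mathbf 1+(\mathsf B_{l,\kappa}\mathsf R_{\xi_l,\alpha}^T\mathsf P_{\xi_l}\mathsf R_{\xi_l,\beta})\circ\mathsf U^{sc,i}(q_\kappa,q_{\kappa_{2l-1}})\mathbf 1-(\mathsf B_{l,\kappa}\mathsf R_{\xi_l,\beta}^T\mathsf P_{\xi_l}\mathsf R_{\xi_l,\alpha})\circ\mathsf U^{sc,i}(q_\kappa,q_{\kappa_{2l}})\mathbf 1\Bigr] + \mathsf M^{-1}\sum_{l,m}\Bigl[(\mathsf E_{\xi_l}\mathsf A_{lm,\kappa})\circ\mathsf F^{sc,i}_m(q_\kappa,q_\kappa)\mathbf 1+(\mathsf A_{lm,\kappa}\mathsf R_{\xi_l,\alpha}^T\mathsf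 P_{\xi_l}\mathsf R_{\xi_l,\beta})\circ\mathsf F^{sc,i}_m(q_\kappa,q_{\kappa_{2l-1}})\mathbf 1-(\mathsf A_{lm,\kappa}\mathsf R_{\xi_l,\beta}^T\mathsf P_{\xi_l}\mathsf R_{\xi_l,\alpha})\circ\mathsf F^{sc,i}_m(q_\kappa,q_{\kappa_{2l}})\mathbf 1\Bigr].$$ *)

theory Defs
  imports "HOL-Analysis.Analysis" "HOL-Library.Numeral_Type"
begin

section \<open>Gas model (states are vectors in real^5: rho, rho V1, rho V2, rho V3, rho E)\<close>

type_synonym state = "real ^ 5"

definition cv :: "real \<Rightarrow> real \<Rightarrow> real" where "cv R g = R / (g - 1)"
definition cp :: "real \<Rightarrow> real \<Rightarrow> real" where "cp R g = g * R / (g - 1)"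

definition dens :: "state \<Rightarrow> real" where "dens u = u $ 1"
definition mom :: "state \<Rightarrow> nat \<Rightarrow> real" where
  "mom u m = (if m = 1 then u $ 2 else if m = 2 then u $ 3 else u $ 4)"
definition vel :: "state \<Rightarrow> nat \<Rightarrow> real" where "vel u m = mom u m / dens u"
definition tot_energy :: "state \<Rightarrow> real" where "tot_energy u = u $ 5 / dens u"
definition temp :: "real \<Rightarrow> real \<Rightarrow> state \<Rightarrow> real" where
  "temp R g u = (tot_energy u - (vel u 1 ^ 2 + vel u 2 ^ 2 + vel u 3 ^ 2) / 2) / cv R g"
definition pres :: "real \<Rightarrow> real \<Rightarrow> state \<Rightarrow> real" where
  "pres R g u = dens u * R * temp R g u"

definition flux :: "real \<Rightarrow> real \<Rightarrow> nat \<Rightarrow> state \<Rightarrow> state" where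
  "flux R g m u = (\<chi> i.
     if i = 1 then dens u * vel u m
     else if i = 2 then dens u * vel u m * vel u 1 + (if m = 1 then pres R g u else 0)
     else if i = 3 then dens u * vel u m * vel u 2 + (if m = 2 then pres R g u else 0)
     else if i = 4 then dens u * vel u m * vel u 3 + (if m = 3 then pres R g u else 0)
     else dens u * vel u m * (tot_energy u + pres R g u / dens u))"

definition admissible :: "real \<Rightarrow> real \<Rightarrow> state \<Rightarrow> bool" where
  "admissible R g u \<longleftrightarrow> dens u > 0 \<and> temp R g u > 0"

text \<open>Entropy; Ti, ri are the reference values T_infinity, rho_infinity.\<close>
definition thermo_entropy :: "real \<Rightarrow> real \<Rightarrow> real \<Rightarrow> real \<Rightarrow> state \<Rightarrow> real" where
  "thermo_entropy R g Ti ri u = R / (g - 1) * ln (temp R g u / Ti) - R * ln (dens u / ri)"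
definition math_entropy :: "real \<Rightarrow> real \<Rightarrow> real \<Rightarrow> real \<Rightarrow> state \<Rightarrow> real" where
  "math_entropy R g Ti ri u = - dens u * thermo_entropy R g Ti ri u"
definition entropy_flux :: "real \<Rightarrow> real \<Rightarrow> real \<Rightarrow> real \<Rightarrow> nat \<Rightarrow> state \<Rightarrow> real" where
  "entropy_flux R g Ti ri m u = - dens u * thermo_entropy R g Ti ri u * vel u m"
definition entropy_var :: "real \<Rightarrow> real \<Rightarrow> real \<Rightarrow> real \<Rightarrow> state \<Rightarrow> state" where
  "entropy_var R g Ti ri u =
     (\<chi> i. frechet_derivative (math_entropy R g Ti ri) (at u) (axis i 1))"
definition pot_phi :: "real \<Rightarrow> real \<Rightarrow> real \<Rightarrow> real \<Rightarrow> state \<Rightarrow> real" where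
  "pot_phi R g Ti ri u = entropy_var R g Ti ri u \<bullet> u - math_entropy R g Ti ri u"
definition pot_psi :: "real \<Rightarrow> real \<Rightarrow> real \<Rightarrow> real \<Rightarrow> nat \<Rightarrow> state \<Rightarrow> real" where
  "pot_psi R g Ti ri m u = entropy_var R g Ti ri u \<bullet> flux R g m u - entropy_flux R g Ti ri m u"

definition two_point_fluxes ::
  "real \<Rightarrow> real \<Rightarrow> real \<Rightarrow> real \<Rightarrow> (state \<Rightarrow> state \<Rightarrow> state) \<Rightarrow> (nat \<Rightarrow> state \<Rightarrow> state \<Rightarrow> state) \<Rightarrow> bool" where
  "two_point_fluxes R g Ti ri Usc Fsc \<longleftrightarrow>
     (\<forall>u v. admissible R g u \<and> admissible R g v \<longrightarrow>
        Usc u v = Usc v u \<and> (\<forall>m\<in>{1..3}. Fsc m u v = Fsc m v u)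
      \<and> (entropy_var R g Ti ri u - entropy_var R g Ti ri v) \<bullet> Usc u v
            = pot_phi R g Ti ri u - pot_phi R g Ti ri v
      \<and> (\<forall>m\<in>{1..3}. (entropy_var R g Ti ri u - entropy_var R g Ti ri v) \<bullet> Fsc m u v
            = pot_psi R g Ti ri m u - pot_psi R g Ti ri m v))
   \<and> (\<forall>u. admissible R g u \<longrightarrow> Usc u u = u \<and> (\<forall>m\<in>{1..3}. Fsc m u u = flux R g m u))"

section \<open>Matrices (0-based indices)\<close>

text \<open>A node of an element is a triple (i1,i2,i3) with i_l < N_l; the Kronecker product
  X1 (x) X2 (x) X3 is indexed by such triples.  1-D matrices are nat => nat => real.\<close>
type_synonym node = "nat \<times> nat \<times> nat"
type_synonym mat = "node \<Rightarrow> node \<Rightarrow> real"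

definition kron3 :: "(nat \<Rightarrow> nat \<Rightarrow> real) \<Rightarrow> (nat \<Rightarrow> nat \<Rightarrow> real) \<Rightarrow> (nat \<Rightarrow> nat \<Rightarrow> real) \<Rightarrow> mat" where
  "kron3 X Y Z = (\<lambda>(i1, i2, i3) (j1, j2, j3). X i1 j1 * Y i2 j2 * Z i3 j3)"

definition slot :: "nat \<Rightarrow> (nat \<Rightarrow> nat \<Rightarrow> real) \<Rightarrow> (nat \<Rightarrow> nat \<Rightarrow> nat \<Rightarrow> real) \<Rightarrow> mat" where
  "slot l X F = kron3 (if l = 1 then X else F 1) (if l = 2 then X else F 2) (if l = 3 then X else F 3)"

definition idm :: "nat \<Rightarrow> nat \<Rightarrow> real" where "idm i j = (if i = j then 1 else 0)"

definition nodes :: "(nat \<Rightarrow> nat) \<Rightarrow> node set" where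
  "nodes Nn = {..<Nn 1} \<times> {..<Nn 2} \<times> {..<Nn 3}"

text \<open>Index set of the face operators (slot l has the single index 0).\<close>
definition face :: "(nat \<Rightarrow> nat) \<Rightarrow> nat \<Rightarrow> node set" where
  "face Nn l = {..<(if l = 1 then 1 else Nn 1)} \<times> {..<(if l = 2 then 1 else Nn 2)}
               \<times> {..<(if l = 3 then 1 else Nn 3)}"

definition mmul :: "'c set \<Rightarrow> ('a \<Rightarrow> 'c \<Rightarrow> real) \<Rightarrow> ('c \<Rightarrow> 'b \<Rightarrow> real) \<Rightarrow> 'a \<Rightarrow> 'b \<Rightarrow> real" where
  "mmul S X Y = (\<lambda>a b. \<Sum>c\<in>S. X a c * Y c b)"
definition mtr :: "('a \<Rightarrow> 'b \<Rightarrow> real) \<Rightarrow> 'b \<Rightarrow> 'a \<Rightarrow> real" where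
  "mtr X = (\<lambda>a b. X b a)"
definition madd :: "('a \<Rightarrow> 'b \<Rightarrow> real) \<Rightarrow> ('a \<Rightarrow> 'b \<Rightarrow> real) \<Rightarrow> 'a \<Rightarrow> 'b \<Rightarrow> real" where
  "madd X Y = (\<lambda>a b. X a b + Y a b)"
definition hada :: "('a \<Rightarrow> 'b \<Rightarrow> real) \<Rightarrow> ('a \<Rightarrow> 'b \<Rightarrow> real) \<Rightarrow> 'a \<Rightarrow> 'b \<Rightarrow> real" where
  "hada X Y = (\<lambda>a b. X a b * Y a b)"
definition diagm :: "('a \<Rightarrow> real) \<Rightarrow> 'a \<Rightarrow> 'a \<Rightarrow> real" where
  "diagm d = (\<lambda>a b. if a = b then d a else 0)"
definition rsum :: "'b set \<Rightarrow> ('a \<Rightarrow> 'b \<Rightarrow> real) \<Rightarrow> 'a \<Rightarrow> real" where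
  "rsum S X = (\<lambda>a. \<Sum>b\<in>S. X a b)"
definition mvec :: "'b set \<Rightarrow> ('a \<Rightarrow> 'b \<Rightarrow> real) \<Rightarrow> ('b \<Rightarrow> real) \<Rightarrow> 'a \<Rightarrow> real" where
  "mvec S X v = (\<lambda>a. \<Sum>b\<in>S. X a b * v b)"
text \<open>Inverse of a diagonal matrix (used for M, which is diagonal).\<close>
definition dinv :: "('a \<Rightarrow> 'a \<Rightarrow> real) \<Rightarrow> 'a \<Rightarrow> 'a \<Rightarrow> real" where
  "dinv X = diagm (\<lambda>a. inverse (X a a))"

text \<open>e_1^T, e_N^T as 1 x N matrices and E = e_N e_N^T - e_1 e_1^T.\<close>
definition e_first :: "nat \<Rightarrow> nat \<Rightarrow> real" where
  "e_first i j = (if i = 0 \<and> j = 0 then 1 else 0)"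
definition e_last :: "nat \<Rightarrow> nat \<Rightarrow> nat \<Rightarrow> real" where
  "e_last n i j = (if i = 0 \<and> j = n - 1 then 1 else 0)"
definition Emat :: "nat \<Rightarrow> nat \<Rightarrow> nat \<Rightarrow> real" where
  "Emat n i j = (if i = n - 1 \<and> j = n - 1 then 1 else 0) - (if i = 0 \<and> j = 0 then 1 else 0)"

definition sbp_1d ::
  "nat \<Rightarrow> (nat \<Rightarrow> real) \<Rightarrow> (nat \<Rightarrow> nat \<Rightarrow> real) \<Rightarrow> (nat \<Rightarrow> nat \<Rightarrow> real) \<Rightarrow> bool" where
  "sbp_1d n xi H Q \<longleftrightarrow> 2 \<le> n
     \<and> (\<forall>i j. i < j \<and> j < n \<longrightarrow> xi i < xi j)
     \<and> (\<forall>i<n. \<forall>j<n. i \<noteq> j \<longrightarrow> H i j = 0) \<and> (\<forall>i<n. H i i > 0)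
     \<and> (\<forall>i<n. \<forall>j<n. Q i j + Q j i = Emat n i j)
     \<and> (\<forall>i<n. (\<Sum>j<n. Q i j / H i i) = 0)"

definition D1 :: "(nat \<Rightarrow> nat \<Rightarrow> real) \<Rightarrow> (nat \<Rightarrow> nat \<Rightarrow> real) \<Rightarrow> nat \<Rightarrow> nat \<Rightarrow> real" where
  "D1 H Q i j = Q i j / H i i"

definition Dxi :: "(nat \<Rightarrow> nat \<Rightarrow> nat \<Rightarrow> real) \<Rightarrow> (nat \<Rightarrow> nat \<Rightarrow> nat \<Rightarrow> real) \<Rightarrow> nat \<Rightarrow> mat" where
  "Dxi H Q l = slot l (D1 (H l) (Q l)) (\<lambda>_. idm)"
definition Exi :: "(nat \<Rightarrow> nat) \<Rightarrow> (nat \<Rightarrow> nat \<Rightarrow> nat \<Rightarrow> real) \<Rightarrow> nat \<Rightarrow> mat" where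
  "Exi Nn H l = slot l (Emat (Nn l)) H"
definition Ralpha :: "nat \<Rightarrow> mat" where
  "Ralpha l = slot l e_first (\<lambda>_. idm)"
definition Rbeta :: "(nat \<Rightarrow> nat) \<Rightarrow> nat \<Rightarrow> mat" where
  "Rbeta Nn l = slot l (e_last (Nn l)) (\<lambda>_. idm)"
definition Pxi :: "(nat \<Rightarrow> nat \<Rightarrow> nat \<Rightarrow> real) \<Rightarrow> nat \<Rightarrow> mat" where
  "Pxi H l = slot l idm H"
definition Mmat :: "(nat \<Rightarrow> nat \<Rightarrow> nat \<Rightarrow> real) \<Rightarrow> mat" where
  "Mmat H = kron3 (H 1) (H 2) (H 3)"

definition fmat :: "(state \<Rightarrow> state \<Rightarrow> state) \<Rightarrow> (node \<Rightarrow> state) \<Rightarrow> (node \<Rightarrow> state) \<Rightarrow> 5 \<Rightarrow> mat" where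
  "fmat f qa qb i = (\<lambda>a b. f (qa a) (qb b) $ i)"

definition vol_part ::
  "(nat \<Rightarrow> nat) \<Rightarrow> (nat \<Rightarrow> nat \<Rightarrow> nat \<Rightarrow> real) \<Rightarrow> (nat \<Rightarrow> nat \<Rightarrow> nat \<Rightarrow> real) \<Rightarrow> nat
   \<Rightarrow> (node \<Rightarrow> real) \<Rightarrow> (state \<Rightarrow> state \<Rightarrow> state) \<Rightarrow> (node \<Rightarrow> state) \<Rightarrow> 5 \<Rightarrow> node \<Rightarrow> real" where
  "vol_part Nn H Q l c f qk i =
     rsum (nodes Nn)
       (hada (madd (mmul (nodes Nn) (Dxi H Q l) (diagm c)) (mmul (nodes Nn) (diagm c) (Dxi H Q l)))
             (fmat f qk qk i))"

definition surf_part ::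
  "(nat \<Rightarrow> nat) \<Rightarrow> (nat \<Rightarrow> nat \<Rightarrow> nat \<Rightarrow> real) \<Rightarrow> nat
   \<Rightarrow> (node \<Rightarrow> real) \<Rightarrow> (state \<Rightarrow> state \<Rightarrow> state) \<Rightarrow> (node \<Rightarrow> state) \<Rightarrow> (node \<Rightarrow> state) \<Rightarrow> (node \<Rightarrow> state)
   \<Rightarrow> 5 \<Rightarrow> node \<Rightarrow> real" where
  "surf_part Nn H l c f qk qm qp i = (\<lambda>a.
       rsum (nodes Nn) (hada (mmul (nodes Nn) (Exi Nn H l) (diagm c)) (fmat f qk qk i)) a
     + rsum (nodes Nn) (hada (mmul (nodes Nn) (diagm c)
          (mmul (face Nn l) (mmul (face Nn l) (mtr (Ralpha l)) (Pxi H l)) (Rbeta Nn l))) (fmat f qk qm i)) a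
     - rsum (nodes Nn) (hada (mmul (nodes Nn) (diagm c)
          (mmul (face Nn l) (mmul (face Nn l) (mtr (Rbeta Nn l)) (Pxi H l)) (Ralpha l))) (fmat f qk qp i)) a)"

end

theory Submission
  imports Defs
begin

text \<open>At a constant state every two-point flux matrix is constant, so each Hadamard product
  collapses to a flux value times a row sum of a metric-weighted operator.  Since \<open>D\<^sub>l 1 = 0\<close>,
  the volume terms reduce to the discrete metric divergences \<open>\<Sum>\<^sub>l D\<^sub>l B\<^sub>l 1\<close> and
  \<open>\<Sum>\<^sub>l D\<^sub>l A\<^sub>l\<^sub>m 1\<close>, which the discrete geometric conservation laws turn into \<open>-dJ/d\<tau>\<close> and \<open>0\<close>.
  The interface terms cancel node by node: the diagonal of \<open>E\<^sub>l\<close>, built from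
  \<open>e\<^sub>N e\<^sub>N\<^sup>T - e\<^sub>1 e\<^sub>1\<^sup>T\<close>, is balanced exactly by the row sums of \<open>R\<^sub>\<alpha>\<^sup>T P R\<^sub>\<beta>\<close> and
  \<open>R\<^sub>\<beta>\<^sup>T P R\<^sub>\<alpha>\<close>.  What remains of the scheme is \<open>J dq/d\<tau> = 0\<close> with \<open>J > 0\<close>.\<close>

lemma sum_product3:
  fixes f g h :: "'a \<Rightarrow> 'b::comm_semiring_0"
  shows "sum f A1 * sum g A2 * sum h A3 = (\<Sum>x\<in>A1. \<Sum>y\<in>A2. \<Sum>z\<in>A3. f x * g y * h z)"
proof -
  have "sum f A1 * sum g A2 * sum h A3 = (\<Sum>x\<in>A1. \<Sum>y\<in>A2. f x * g y) * sum h A3"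
    by (simp only: sum_product)
  also have "\<dots> = (\<Sum>x\<in>A1. \<Sum>y\<in>A2. f x * g y * sum h A3)"
    by (simp only: sum_distrib_right)
  finally show ?thesis
    by (simp only: sum_distrib_left)
qed

lemma sum_cartesian_product3:
  "sum F (A1 \<times> A2 \<times> A3) = (\<Sum>x\<in>A1. \<Sum>y\<in>A2. \<Sum>z\<in>A3. F (x, y, z))"
  by (simp add: sum.cartesian_product)

lemma rsum_kron3:
  "rsum (A1 \<times> A2 \<times> A3) (kron3 X Y Z) (a1, a2, a3) = rsum A1 X a1 * rsum A2 Y a2 * rsum A3 Z a3"
  unfolding rsum_def kron3_def sum_cartesian_product3 sum_product3 by simp

lemma mmul_kron3:
  "mmul (A1 \<times> A2 \<times> A3) (kron3 X1 X2 X3) (kron3 Y1 Y2 Y3)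
     = kron3 (mmul A1 X1 Y1) (mmul A2 X2 Y2) (mmul A3 X3 Y3)"
  unfolding fun_eq_iff mmul_def kron3_def sum_cartesian_product3 sum_product3 by (simp add: ac_simps)

lemma mtr_kron3: "mtr (kron3 X Y Z) = kron3 (mtr X) (mtr Y) (mtr Z)"
  unfolding mtr_def kron3_def by (auto simp: fun_eq_iff)

definition diagonal_on :: "'a set \<Rightarrow> ('a \<Rightarrow> 'a \<Rightarrow> real) \<Rightarrow> bool" where
  "diagonal_on S X \<longleftrightarrow> (\<forall>a\<in>S. \<forall>b\<in>S. a \<noteq> b \<longrightarrow> X a b = 0)"

lemma diagonal_on_kron3:
  assumes "diagonal_on A1 X" "diagonal_on A2 Y" "diagonal_on A3 Z"
  shows "diagonal_on (A1 \<times> A2 \<times> A3) (kron3 X Y Z)"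
  using assms unfolding diagonal_on_def kron3_def by auto

lemma diagonal_on_Emat: "diagonal_on S (Emat n)"
  unfolding diagonal_on_def Emat_def by auto

lemma sum_diagonal_on:
  assumes "diagonal_on S X" "finite S" "a \<in> S"
  shows "(\<Sum>b\<in>S. X a b * c b) = X a a * c a"
proof -
  have "(\<Sum>b\<in>S. X a b * c b) = X a a * c a + (\<Sum>b\<in>S - {a}. X a b * c b)"
    using assms by (simp add: sum.remove)
  also have "(\<Sum>b\<in>S - {a}. X a b * c b) = 0"
    using assms unfolding diagonal_on_def by (intro sum.neutral) auto
  finally show ?thesis by simp
qed

lemma rsum_hada_const_right:
  assumes "\<forall>b\<in>S. K a b = k"
  shows "rsum S (hada X K) a = k * rsum S X a"
  using assms unfolding rsum_def hada_def by (simp add: sum_distrib_left mult.commute)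

lemma rsum_mmul_diagm_left:
  assumes "finite S" "a \<in> S"
  shows "rsum S (mmul S (diagm c) Y) a = c a * rsum S Y a"
  using assms unfolding rsum_def mmul_def diagm_def
  by (simp add: if_distrib[of "\<lambda>x. x * _"] sum.delta sum_distrib_left cong: if_cong)

lemma rsum_mmul_diagm_right:
  assumes "finite S"
  shows "rsum S (mmul S X (diagm c)) a = (\<Sum>b\<in>S. X a b * c b)"
  using assms unfolding rsum_def mmul_def diagm_def
  by (simp add: if_distrib[of "\<lambda>x. _ * x"] sum.delta' cong: if_cong)

lemma rsum_idm_mmul_idm:
  assumes "diagonal_on {..<n} X" "i < n"
  shows "rsum {..<n} (mmul {..<n} (mmul {..<n} (mtr idm) X) idm) i = X i i"
proof -
  have "mmul {..<n} (mmul {..<n} (mtr idm) X) idm i j = X i j" if "j < n" for j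
    using assms(2) that unfolding mmul_def mtr_def idm_def
    by (simp add: if_distrib[of "\<lambda>x. x * _"] if_distrib[of "\<lambda>x. _ * x"] cong: if_cong)
  then have "rsum {..<n} (mmul {..<n} (mmul {..<n} (mtr idm) X) idm) i = (\<Sum>j<n. X i j * 1)"
    unfolding rsum_def by simp
  also have "\<dots> = X i i"
    using sum_diagonal_on[of "{..<n}" X i "\<lambda>_. 1"] assms by simp
  finally show ?thesis .
qed

lemma rsum_e_first_e_last:
  "i < n \<Longrightarrow> rsum {..<n} (mmul {..<1} (mmul {..<1} (mtr e_first) idm) (e_last n)) i
     = (if i = 0 then 1 else 0)"
  unfolding rsum_def mmul_def mtr_def e_first_def e_last_def idm_def
  by (simp add: if_distrib[of "\<lambda>x. x * _"] sum.delta cong: if_cong)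

lemma rsum_e_last_e_first:
  "i < n \<Longrightarrow> rsum {..<n} (mmul {..<1} (mmul {..<1} (mtr (e_last n)) idm) e_first) i
     = (if i = n - 1 then 1 else 0)"
  unfolding rsum_def mmul_def mtr_def e_first_def e_last_def idm_def
  by (auto simp: if_distrib[of "\<lambda>x. x * _"] sum.delta cong: if_cong)

lemma finite_nodes: "finite (nodes Nn)"
  unfolding nodes_def by auto

lemma sbp_1d_diagonal: "sbp_1d n xi H Q \<Longrightarrow> diagonal_on {..<n} H"
  unfolding sbp_1d_def diagonal_on_def by blast

lemma rsum_Dxi_eq_0:
  assumes "sbp_1d (Nn l) (xi l) (H l) (Q l)" "l \<in> {1..3}" "a \<in> nodes Nn"
  shows "rsum (nodes Nn) (Dxi H Q l) a = 0"
proof -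
  obtain a1 a2 a3 where a: "a = (a1, a2, a3)" by (cases a)
  have D1_rsum: "rsum {..<Nn l} (D1 (H l) (Q l)) i = 0" if "i < Nn l" for i
    using assms(1) that unfolding sbp_1d_def rsum_def D1_def by auto
  have "l = 1 \<or> l = 2 \<or> l = 3" using assms(2) by auto
  then show ?thesis
    using D1_rsum assms(3) unfolding a Dxi_def slot_def nodes_def by (auto simp: rsum_kron3)
qed

lemma diagonal_on_Exi:
  assumes "\<forall>k\<in>{1..3}. diagonal_on {..<Nn k} (H k)" "l \<in> {1..3}"
  shows "diagonal_on (nodes Nn) (Exi Nn H l)"
  using assms unfolding Exi_def slot_def nodes_def
  by (auto intro!: diagonal_on_kron3 simp: diagonal_on_Emat)

lemma rsum_face_operator:
  assumes H: "\<forall>k\<in>{1..3}. diagonal_on {..<Nn k} (H k)" and l: "l \<in> {1..3}"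
    and b: "b \<in> nodes Nn"
    and XY: "\<forall>i<Nn l. rsum {..<Nn l} (mmul {..<1} (mmul {..<1} (mtr X) idm) Y) i = d i"
  shows "rsum (nodes Nn) (mmul (face Nn l) (mmul (face Nn l) (mtr (slot l X (\<lambda>_. idm))) (Pxi H l))
           (slot l Y (\<lambda>_. idm))) b = slot l (diagm d) H b b"
proof -
  obtain b1 b2 b3 where bb: "b = (b1, b2, b3)" by (cases b)
  have bs: "b1 < Nn 1" "b2 < Nn 2" "b3 < Nn 3" using b unfolding bb nodes_def by auto
  have "l = 1 \<or> l = 2 \<or> l = 3" using l by auto
  then show ?thesis
    using XY H bs
    unfolding bb Pxi_def slot_def face_def nodes_def mtr_kron3 mmul_kron3 rsum_kron3
    by (elim disjE) (simp_all add: rsum_idm_mmul_idm kron3_def diagm_def)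
qed

lemma surface_weights_cancel:
  assumes H: "\<forall>k\<in>{1..3}. diagonal_on {..<Nn k} (H k)" and l: "l \<in> {1..3}"
    and b: "b \<in> nodes Nn"
  shows "Exi Nn H l b b
     + rsum (nodes Nn) (mmul (face Nn l) (mmul (face Nn l) (mtr (Ralpha l)) (Pxi H l)) (Rbeta Nn l)) b
     - rsum (nodes Nn) (mmul (face Nn l) (mmul (face Nn l) (mtr (Rbeta Nn l)) (Pxi H l)) (Ralpha l)) b
     = 0"
proof -
  have alpha_beta: "rsum (nodes Nn) (mmul (face Nn l) (mmul (face Nn l) (mtr (Ralpha l)) (Pxi H l))
      (Rbeta Nn l)) b = slot l (diagm (\<lambda>i. if i = 0 then 1 else 0)) H b b"
    unfolding Ralpha_def Rbeta_def by (rule rsum_face_operator[OF H l b]) (blast intro: rsum_e_first_e_last)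
  have beta_alpha: "rsum (nodes Nn) (mmul (face Nn l) (mmul (face Nn l) (mtr (Rbeta Nn l)) (Pxi H l))
      (Ralpha l)) b = slot l (diagm (\<lambda>i. if i = Nn l - 1 then 1 else 0)) H b b"
    unfolding Ralpha_def Rbeta_def by (rule rsum_face_operator[OF H l b]) (blast intro: rsum_e_last_e_first)
  have "l = 1 \<or> l = 2 \<or> l = 3" using l by auto
  then show ?thesis
    unfolding alpha_beta beta_alpha Exi_def slot_def kron3_def Emat_def diagm_def
    by (elim disjE) (auto simp: algebra_simps split: prod.split)
qed

lemma fmat_const_state:
  assumes "\<forall>x\<in>S. qa x = u" "\<forall>x\<in>S. qb x = u" "a \<in> S" "b \<in> S"
  shows "fmat f qa qb i a b = f u u $ i"
  using assms unfolding fmat_def by simp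

lemma vol_part_const_state:
  assumes sbp: "sbp_1d (Nn l) (xi l) (H l) (Q l)" and l: "l \<in> {1..3}"
    and a: "a \<in> nodes Nn" and q: "\<forall>x\<in>nodes Nn. q x = u"
  shows "vol_part Nn H Q l c f q i a = f u u $ i * rsum (nodes Nn) (mmul (nodes Nn) (Dxi H Q l) (diagm c)) a"
proof -
  let ?N = "nodes Nn"
  have "rsum ?N (madd (mmul ?N (Dxi H Q l) (diagm c)) (mmul ?N (diagm c) (Dxi H Q l))) a
      = rsum ?N (mmul ?N (Dxi H Q l) (diagm c)) a + c a * rsum ?N (Dxi H Q l) a"
    unfolding madd_def rsum_mmul_diagm_left[OF finite_nodes a, symmetric]
    by (simp add: rsum_def sum.distrib)
  also have "rsum ?N (Dxi H Q l) a = 0"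
    using rsum_Dxi_eq_0 sbp l a by blast
  finally show ?thesis
    unfolding vol_part_def using a q
    by (subst rsum_hada_const_right[where k = "f u u $ i"]) (auto simp: fmat_const_state)
qed

lemma surf_part_const_state:
  assumes H: "\<forall>k\<in>{1..3}. diagonal_on {..<Nn k} (H k)" and l: "l \<in> {1..3}"
    and b: "b \<in> nodes Nn"
    and q: "\<forall>x\<in>nodes Nn. q x = u" "\<forall>x\<in>nodes Nn. qm x = u" "\<forall>x\<in>nodes Nn. qp x = u"
  shows "surf_part Nn H l c f q qm qp i b = 0"
proof -
  let ?N = "nodes Nn" and ?k = "f u u $ i"
  let ?AB = "mmul (face Nn l) (mmul (face Nn l) (mtr (Ralpha l)) (Pxi H l)) (Rbeta Nn l)"
  let ?BA = "mmul (face Nn l) (mmul (face Nn l) (mtr (Rbeta Nn l)) (Pxi H l)) (Ralpha l)"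
  have "surf_part Nn H l c f q qm qp i b
      = ?k * (\<Sum>b'\<in>?N. Exi Nn H l b b' * c b') + ?k * (c b * rsum ?N ?AB b) - ?k * (c b * rsum ?N ?BA b)"
    unfolding surf_part_def using q b
    by (simp add: rsum_hada_const_right[where k = ?k] fmat_const_state
        rsum_mmul_diagm_left rsum_mmul_diagm_right finite_nodes)
  also have "(\<Sum>b'\<in>?N. Exi Nn H l b b' * c b') = Exi Nn H l b b * c b"
    using sum_diagonal_on[OF diagonal_on_Exi[OF H l] finite_nodes b] .
  finally have "surf_part Nn H l c f q qm qp i b
      = ?k * c b * (Exi Nn H l b b + rsum ?N ?AB b - rsum ?N ?BA b)"
    by (simp add: algebra_simps)
  then show ?thesis
    using surface_weights_cancel[OF H l b] by simp
qed

lemma flux_differencing_const_state: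
  fixes Fsc :: "nat \<Rightarrow> state \<Rightarrow> state \<Rightarrow> state" and A :: "nat \<Rightarrow> nat \<Rightarrow> node \<Rightarrow> real"
  assumes sbp: "\<forall>l\<in>{1..3}. sbp_1d (Nn l) (xi l) (H l) (Q l)" and a: "a \<in> nodes Nn"
    and q: "\<forall>x\<in>nodes Nn. q x = u" and qnb: "\<forall>j\<in>{1..6}. \<forall>x\<in>nodes Nn. qnb j x = u"
  shows "(\<Sum>l\<in>{1..3}. vol_part Nn H Q l (B l) Usc q i a)
       + (\<Sum>l\<in>{1..3}. \<Sum>m\<in>{1..3}. vol_part Nn H Q l (A l m) (Fsc m) q i a)
       - mvec (nodes Nn) (dinv (Mmat H))
           (\<lambda>b. (\<Sum>l\<in>{1..3}. surf_part Nn H l (B l) Usc q (qnb (2 * l - 1)) (qnb (2 * l)) i b)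
              + (\<Sum>l\<in>{1..3}. \<Sum>m\<in>{1..3}. surf_part Nn H l (A l m) (Fsc m) q
                                  (qnb (2 * l - 1)) (qnb (2 * l)) i b)) a
     = Usc u u $ i * (\<Sum>l\<in>{1..3}. rsum (nodes Nn) (mmul (nodes Nn) (Dxi H Q l) (diagm (B l))) a)
       + (\<Sum>m\<in>{1..3}. Fsc m u u $ i
           * (\<Sum>l\<in>{1..3}. rsum (nodes Nn) (mmul (nodes Nn) (Dxi H Q l) (diagm (A l m))) a))"
proof -
  have H: "\<forall>k\<in>{1..3}. diagonal_on {..<Nn k} (H k)"
    using sbp sbp_1d_diagonal by blast
  have faces: "\<forall>x\<in>nodes Nn. qnb (2 * l - 1) x = u" "\<forall>x\<in>nodes Nn. qnb (2 * l) x = u"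
    if "l \<in> {1..3}" for l :: nat
  proof -
    have "2 * l - 1 \<in> {1..6}" "2 * l \<in> {1..6}"
      using that by auto
    then show "\<forall>x\<in>nodes Nn. qnb (2 * l - 1) x = u" "\<forall>x\<in>nodes Nn. qnb (2 * l) x = u"
      using qnb by blast+
  qed
  have surface: "mvec (nodes Nn) (dinv (Mmat H))
           (\<lambda>b. (\<Sum>l\<in>{1..3}. surf_part Nn H l (B l) Usc q (qnb (2 * l - 1)) (qnb (2 * l)) i b)
              + (\<Sum>l\<in>{1..3}. \<Sum>m\<in>{1..3}. surf_part Nn H l (A l m) (Fsc m) q
                                  (qnb (2 * l - 1)) (qnb (2 * l)) i b)) a = 0"
    unfolding mvec_def using surf_part_const_state[OF H _ _ q] faces
    by (intro sum.neutral) simp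
  have "(\<Sum>l\<in>{1..3}. \<Sum>m\<in>{1..3}. vol_part Nn H Q l (A l m) (Fsc m) q i a)
      = (\<Sum>l\<in>{1..3}. \<Sum>m\<in>{1..3}. Fsc m u u $ i
           * rsum (nodes Nn) (mmul (nodes Nn) (Dxi H Q l) (diagm (A l m))) a)"
    using vol_part_const_state[where xi = xi, OF _ _ a q] sbp by (intro sum.cong) simp_all
  also have "\<dots> = (\<Sum>m\<in>{1..3}. \<Sum>l\<in>{1..3}. Fsc m u u $ i
           * rsum (nodes Nn) (mmul (nodes Nn) (Dxi H Q l) (diagm (A l m))) a)"
    by (rule sum.swap)
  also have "\<dots> = (\<Sum>m\<in>{1..3}. Fsc m u u $ i
           * (\<Sum>l\<in>{1..3}. rsum (nodes Nn) (mmul (nodes Nn) (Dxi H Q l) (diagm (A l m))) a))"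
    by (simp add: sum_distrib_left)
  finally have volume_A: "(\<Sum>l\<in>{1..3}. \<Sum>m\<in>{1..3}. vol_part Nn H Q l (A l m) (Fsc m) q i a)
      = (\<Sum>m\<in>{1..3}. Fsc m u u $ i
           * (\<Sum>l\<in>{1..3}. rsum (nodes Nn) (mmul (nodes Nn) (Dxi H Q l) (diagm (A l m))) a))" .
  have volume_B: "(\<Sum>l\<in>{1..3}. vol_part Nn H Q l (B l) Usc q i a)
      = Usc u u $ i * (\<Sum>l\<in>{1..3}. rsum (nodes Nn) (mmul (nodes Nn) (Dxi H Q l) (diagm (B l))) a)"
    unfolding sum_distrib_left using vol_part_const_state[where xi = xi, OF _ _ a q] sbp by (intro sum.cong) simp_all
  show ?thesis
    unfolding surface volume_A volume_B by simp
qed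

lemma has_vector_derivative_zero_of_deriv_mult:
  fixes J :: "real \<Rightarrow> real" and q :: "real \<Rightarrow> real ^ 'n"
  assumes J: "J differentiable at \<tau>" and q: "q differentiable at \<tau>" and J_nonzero: "J \<tau> \<noteq> 0"
    and balance: "\<forall>i. deriv (\<lambda>t. J t * q t $ i) \<tau> = deriv J \<tau> * q \<tau> $ i"
  shows "(q has_vector_derivative 0) (at \<tau>)"
proof -
  let ?v = "vector_derivative q (at \<tau>)"
  have v: "(q has_vector_derivative ?v) (at \<tau>)"
    using q vector_derivative_works by blast
  have J': "(J has_real_derivative deriv J \<tau>) (at \<tau>)"
    using J DERIV_deriv_iff_real_differentiable by blast
  have "J \<tau> * ?v $ i = 0" for i
  proof -
    have "((\<lambda>t. q t $ i) has_real_derivative ?v $ i) (at \<tau>)"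
      using bounded_linear.has_vector_derivative[OF bounded_linear_vec_nth v]
      by (simp add: has_real_derivative_iff_has_vector_derivative)
    from DERIV_imp_deriv[OF DERIV_mult[OF J' this]]
    have "deriv (\<lambda>t. J t * q t $ i) \<tau> = deriv J \<tau> * q \<tau> $ i + J \<tau> * ?v $ i"
      by simp
    then show ?thesis
      using balance by simp
  qed
  then have "?v = 0"
    using J_nonzero by (simp add: vec_eq_iff)
  then show ?thesis
    using v by simp
qed

theorem theorem4p6:
  fixes R g Ti ri :: real
    and Nn :: "nat \<Rightarrow> nat" and xi :: "nat \<Rightarrow> nat \<Rightarrow> real"
    and H Q :: "nat \<Rightarrow> nat \<Rightarrow> nat \<Rightarrow> real"
    and Usc :: "state \<Rightarrow> state \<Rightarrow> state" and Fsc :: "nat \<Rightarrow> state \<Rightarrow> state \<Rightarrow> state"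
    and J :: "'e \<Rightarrow> real \<Rightarrow> node \<Rightarrow> real"
    and B :: "nat \<Rightarrow> 'e \<Rightarrow> real \<Rightarrow> node \<Rightarrow> real"
    and A :: "nat \<Rightarrow> nat \<Rightarrow> 'e \<Rightarrow> real \<Rightarrow> node \<Rightarrow> real"
    and q :: "'e \<Rightarrow> real \<Rightarrow> node \<Rightarrow> state"
    and qnb :: "'e \<Rightarrow> nat \<Rightarrow> real \<Rightarrow> node \<Rightarrow> state"
    and \<kappa> :: 'e and \<tau>0 :: real and uc :: state
  assumes gas: "R > 0" "g > 1" "Ti > 0" "ri > 0"
    and fluxes: "two_point_fluxes R g Ti ri Usc Fsc"
    and sbp: "\<forall>l\<in>{1..3}. sbp_1d (Nn l) (xi l) (H l) (Q l)"
    and J_pos: "\<forall>k \<tau>. \<forall>a\<in>nodes Nn. J k \<tau> a > 0"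
    and J_diff: "\<forall>k \<tau>. \<forall>a\<in>nodes Nn. (\<lambda>t. J k t a) differentiable (at \<tau>)"
    and q_diff: "\<forall>k \<tau>. \<forall>a\<in>nodes Nn. (\<lambda>t. q k t a) differentiable (at \<tau>)"
    and scheme: "\<forall>k \<tau>. \<forall>a\<in>nodes Nn. \<forall>i::5.
        deriv (\<lambda>t. J k t a * q k t a $ i) \<tau>
        + (\<Sum>l\<in>{1..3}. vol_part Nn H Q l (B l k \<tau>) Usc (q k \<tau>) i a)
        + (\<Sum>l\<in>{1..3}. \<Sum>m\<in>{1..3}. vol_part Nn H Q l (A l m k \<tau>) (Fsc m) (q k \<tau>) i a)
        = mvec (nodes Nn) (dinv (Mmat H))
            (\<lambda>b. (\<Sum>l\<in>{1..3}. surf_part Nn H l (B l k \<tau>) Usc (q k \<tau>)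
                                   (qnb k (2 * l - 1) \<tau>) (qnb k (2 * l) \<tau>) i b)
               + (\<Sum>l\<in>{1..3}. \<Sum>m\<in>{1..3}. surf_part Nn H l (A l m k \<tau>) (Fsc m) (q k \<tau>)
                                   (qnb k (2 * l - 1) \<tau>) (qnb k (2 * l) \<tau>) i b)) a"
    and gcl_time: "\<forall>k \<tau>. \<forall>a\<in>nodes Nn.
        deriv (\<lambda>t. J k t a) \<tau>
        + (\<Sum>l\<in>{1..3}. rsum (nodes Nn) (mmul (nodes Nn) (Dxi H Q l) (diagm (B l k \<tau>))) a) = 0"
    and gcl_space: "\<forall>k \<tau>. \<forall>m\<in>{1..3}. \<forall>a\<in>nodes Nn.
        (\<Sum>l\<in>{1..3}. rsum (nodes Nn) (mmul (nodes Nn) (Dxi H Q l) (diagm (A l m k \<tau>))) a) = 0"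
    and uc_adm: "admissible R g uc"
    and q_const: "\<forall>a\<in>nodes Nn. q \<kappa> \<tau>0 a = uc"
    and nb_const: "\<forall>j\<in>{1..6}. \<forall>a\<in>nodes Nn. qnb \<kappa> j \<tau>0 a = uc"
  shows "\<forall>a\<in>nodes Nn. ((\<lambda>t. q \<kappa> t a) has_vector_derivative 0) (at \<tau>0)"
proof
  fix a assume a: "a \<in> nodes Nn"
  have consistent: "Usc uc uc = uc"
    using fluxes uc_adm unfolding two_point_fluxes_def by blast
  have "deriv (\<lambda>t. J \<kappa> t a * q \<kappa> t a $ i) \<tau>0 = deriv (\<lambda>t. J \<kappa> t a) \<tau>0 * q \<kappa> \<tau>0 a $ i" for i
  proof -
    have metric_B: "(\<Sum>l\<in>{1..3}. rsum (nodes Nn) (mmul (nodes Nn) (Dxi H Q l) (diagm (B l \<kappa> \<tau>0))) a)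
        = - deriv (\<lambda>t. J \<kappa> t a) \<tau>0"
      using gcl_time a by (simp add: eq_neg_iff_add_eq_0 add.commute)
    have metric_A: "(\<Sum>m\<in>{1..3}. Fsc m uc uc $ i
        * (\<Sum>l\<in>{1..3}. rsum (nodes Nn) (mmul (nodes Nn) (Dxi H Q l) (diagm (A l m \<kappa> \<tau>0))) a)) = 0"
      using gcl_space a by (intro sum.neutral) simp
    note residual = flux_differencing_const_state[OF sbp a q_const, where qnb = "\<lambda>j. qnb \<kappa> j \<tau>0"
          and B = "\<lambda>l. B l \<kappa> \<tau>0" and A = "\<lambda>l m. A l m \<kappa> \<tau>0" and Usc = Usc and Fsc = Fsc and i = i]
    have "deriv (\<lambda>t. J \<kappa> t a * q \<kappa> t a $ i) \<tau>0 = uc $ i * deriv (\<lambda>t. J \<kappa> t a) \<tau>0"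
      using scheme[rule_format, where k = \<kappa> and \<tau> = \<tau>0 and a = a and i = i, OF a]
        residual[unfolded consistent metric_A metric_B, OF nb_const]
      by linarith
    then show ?thesis
      using q_const a by (simp add: mult.commute)
  qed
  moreover have "J \<kappa> \<tau>0 a \<noteq> 0"
    using J_pos a by (metis less_irrefl)
  ultimately show "((\<lambda>t. q \<kappa> t a) has_vector_derivative 0) (at \<tau>0)"
    using J_diff q_diff a
    by (intro has_vector_derivative_zero_of_deriv_mult[where J = "\<lambda>t. J \<kappa> t a"]) auto
qed

end
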